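(* Let $M=\mathbb{C}^n=C(X_n)$ and let $\mathcal{F}$ be a finite set of bijections $X_n\to X_n$, $X_n=\{1,\dots,n\}$. Let $B=\mathbb{C}^{|\mathcal{F}|}$ and let $\Psi_B:M\to M\otimes B$ be $\Psi_B(e_j)=\sum_{\sigma\in\mathcal{F}}e_{\sigma(j)}\otimes\delta_\sigma$. Then, with $a_{i,j}$ the generators of $\mathbb{A}$ described below, the ideal $\mathcal{J}$ of $\mathbb{A}$ defining the quantum commutant is generated by $$\{a_{i,\sigma(j)}-a_{\sigma^{-1}(i),j}\ :\ 1\le i,j\le n,\ \sigma\in\mathcal{F}\}.$$ Consequently the $\mathrm{C}^*$-algebra $A$ of $\mathrm{QMap}_{\mathcal F}(X_n)$ is the universal unital $\mathrm{C}^*$-algebra generated by elements $a_{i,j}$ ($i,j=1,\dots,n$) satisfying $a_{i,j}^*a_{i,j}=a_{i,j}$, $\sum_{j}a_{i,j}=\mathbb{1}$ for all $i$, and $$a_{\sigma(i),\sigma(j)}=a_{i,j}\qquad (i,j=1,\dots,n,\ \sigma\in\mathcal{F}).$$ Moreover, the quantum commutant of $\mathcal{F}$ coincides with the quantum commutant of the group of bijections generated by $\mathcal{F}$.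
   Context: All $\mathrm{C}^*$-algebras are unital, tensor products are minimal, morphisms are unital $*$-homomorphisms. For a finite-dimensional $\mathrm{C}^*$-algebra $M$, a quantum family of maps labelled by $B$ is a unital $*$-homomorphism $M\to M\otimes B$; $(\mathbb{A},\mathbb{\Phi})$ denotes the quantum family of all maps (the universal one: every unital $*$-homomorphism $\Psi_B:M\to M\otimes B$ equals $(\mathrm{id}_M\otimes\Lambda)\circ\mathbb{\Phi}$ for a unique unital $*$-homomorphism $\Lambda:\mathbb{A}\to B$), with comultiplication $\mathbb{\Delta}$ determined by $(\mathrm{id}_M\otimes\mathbb{\Delta})\mathbb{\Phi}=(\mathbb{\Phi}\otimes\mathrm{id})\mathbb{\Phi}$ and counit $\mathbb{\epsilon}$ determined by $(\mathrm{id}_M\otimes\mathbb{\epsilon})\mathbb{\Phi}=\mathrm{id}_M$. For $M=\mathbb{C}^n$ with standard basis $e_1,\dots,e_n$, $\mathbb{A}$ is the universal unital $\mathrm{C}^*$-algebra generated by $a_{i,j}$ ($1\le i,j\le n$) with $a_{i,j}^*a_{i,j}=a_{i,j}$ and $\sum_j a_{i,j}=\mathbb{1}$, and $\mathbb{\Phi}(e_j)=\sum_i e_i\otimes a_{i,j}$, $\mathbb{\Delta}(a_{i,j})=\sum_k a_{i,k}\otimes a_{k,j}$. Quantum commutant: given $\Psi_B:M\to M\otimes B$, let $\mathcal{J}$ be the closed two-sided ideal of $\mathbb{A}$ generated by $\{(\omega\otimes\mathrm{id}_{\mathbb{A}}\otimes\eta)((\mathbb{\Phi}\otimes\mathrm{id}_B)\Psi_B(m))-(\omega\otimes\eta\otimes\mathrm{id}_{\mathbb{A}})((\Psi_B\otimes\mathrm{id}_{\mathbb{A}})\mathbb{\Phi}(m))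 : m\in M,\ \omega\in M^*,\ \eta\in B^*\}$; $A=\mathbb{A}/\mathcal{J}$ with quotient map $\pi$, $\Phi=(\mathrm{id}_M\otimes\pi)\mathbb{\Phi}$, and $\Delta$ the comultiplication on $A$ with $\Delta\circ\pi=(\pi\otimes\pi)\circ\mathbb{\Delta}$. The pair $(A,\Delta)$ is the quantum commutant $\mathrm{QMap}_{\Psi_B}(\mathrm{Qs}(M))$; $\Phi$ is the universal quantum family of maps commuting with $\Psi_B$, where $\Phi_C:M\to M\otimes C$ commutes with $\Psi_B$ iff $(\Phi_C\otimes\mathrm{id}_B)\Psi_B=(\mathrm{id}_M\otimes\mathrm{flip})(\Psi_B\otimes\mathrm{id}_C)\Phi_C$. For a classical finite family $\mathcal{F}$ of maps $X_n\to X_n$, $\delta_\sigma\in\mathbb{C}^{|\mathcal F|}=C(\mathcal F)$ is the indicator function of $\sigma$, and $\mathrm{QMap}_{\mathcal{F}}(X_n)$ denotes the quantum commutant of the associated $\Psi_B$. *)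

theory Defs
  imports Complex_Main "HOL-Combinatorics.Permutations"
begin

class cstar_algebra = real_normed_algebra_1 + banach +
  fixes scaleC :: "complex \<Rightarrow> 'a \<Rightarrow> 'a"
    and cstar :: "'a \<Rightarrow> 'a"
  assumes scaleC_add_right: "scaleC c (x + y) = scaleC c x + scaleC c y"
    and scaleC_add_left: "scaleC (c + d) x = scaleC c x + scaleC d x"
    and scaleC_scaleC: "scaleC c (scaleC d x) = scaleC (c * d) x"
    and scaleC_one: "scaleC 1 x = x"
    and scaleR_scaleC: "scaleR r x = scaleC (complex_of_real r) x"
    and scaleC_mult_left: "scaleC c (x * y) = scaleC c x * y"
    and scaleC_mult_right: "scaleC c (x * y) = x * scaleC c y"
    and norm_scaleC: "norm (scaleC c x) = cmod c * norm x"
    and cstar_cstar: "cstar (cstar x) = x"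
    and cstar_add: "cstar (x + y) = cstar x + cstar y"
    and cstar_scaleC: "cstar (scaleC c x) = scaleC (cnj c) (cstar x)"
    and cstar_mult: "cstar (x * y) = cstar y * cstar x"
    and cstar_identity: "norm (cstar x * x) = (norm x)\<^sup>2"

definition closed_ideal :: "'a::cstar_algebra set \<Rightarrow> bool" where
  "closed_ideal I \<longleftrightarrow> 0 \<in> I \<and> (\<forall>x\<in>I. \<forall>y\<in>I. x + y \<in> I)
     \<and> (\<forall>c. \<forall>x\<in>I. scaleC c x \<in> I)
     \<and> (\<forall>x\<in>I. \<forall>y. y * x \<in> I \<and> x * y \<in> I) \<and> closed I"

definition closed_ideal_gen :: "'a::cstar_algebra set \<Rightarrow> 'a set" where
  "closed_ideal_gen S = \<Inter>{I. S \<subseteq> I \<and> closed_ideal I}"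

text \<open>
  M = C^n is modelled by functions nat => complex (only coordinates 1..n matter),
  basis vector e_j = (\<lambda>k. if k = j then 1 else 0).
  B = C^|F| = C(F) is modelled by functions on F, basis delta_sigma.
  M \<otimes> B has coordinates (k, sigma); M \<otimes> A \<otimes> B (and M \<otimes> B \<otimes> A) has
  A-valued coordinates (i, sigma).
\<close>

definition basis_vec :: "nat \<Rightarrow> nat \<Rightarrow> complex" where
  "basis_vec j = (\<lambda>k. if k = j then 1 else 0)"

text \<open>Psi_B(m), with Psi_B(e_j) = sum_{sigma in F} e_{sigma j} \<otimes> delta_sigma, extended linearly.\<close>
definition PsiB :: "nat \<Rightarrow> (nat \<Rightarrow> nat) set \<Rightarrow> (nat \<Rightarrow> complex) \<Rightarrow> nat \<Rightarrow> (nat \<Rightarrow> nat) \<Rightarrow> complex" where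
  "PsiB n F m = (\<lambda>k \<sigma>. if \<sigma> \<in> F then (\<Sum>j\<in>{1..n}. m j * (if \<sigma> j = k then 1 else 0)) else 0)"

text \<open>The universal family Phi(m), with Phi(e_j) = sum_i e_i \<otimes> a_{i,j}, extended linearly.\<close>
definition PhiA :: "nat \<Rightarrow> (nat \<Rightarrow> nat \<Rightarrow> 'a::cstar_algebra) \<Rightarrow> (nat \<Rightarrow> complex) \<Rightarrow> nat \<Rightarrow> 'a" where
  "PhiA n a m = (\<lambda>i. \<Sum>j\<in>{1..n}. scaleC (m j) (a i j))"

text \<open>(Phi \<otimes> id_B) Psi_B(m) in M \<otimes> A \<otimes> B.\<close>
definition lhs_tensor :: "nat \<Rightarrow> (nat \<Rightarrow> nat) set \<Rightarrow> (nat \<Rightarrow> nat \<Rightarrow> 'a::cstar_algebra) \<Rightarrow> (nat \<Rightarrow> complex) \<Rightarrow> nat \<Rightarrow> (nat \<Rightarrow> nat) \<Rightarrow> 'a" where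
  "lhs_tensor n F a m = (\<lambda>i \<sigma>. \<Sum>k\<in>{1..n}. scaleC (PsiB n F m k \<sigma>) (a i k))"

text \<open>(Psi_B \<otimes> id_A) Phi(m) in M \<otimes> B \<otimes> A.\<close>
definition rhs_tensor :: "nat \<Rightarrow> (nat \<Rightarrow> nat) set \<Rightarrow> (nat \<Rightarrow> nat \<Rightarrow> 'a::cstar_algebra) \<Rightarrow> (nat \<Rightarrow> complex) \<Rightarrow> nat \<Rightarrow> (nat \<Rightarrow> nat) \<Rightarrow> 'a" where
  "rhs_tensor n F a m = (\<lambda>i \<sigma>. \<Sum>k\<in>{1..n}. scaleC (PsiB n F (basis_vec k) i \<sigma>) (PhiA n a m k))"

text \<open>Slice map by omega in M^* (given by w) and eta in B^* (given by v).\<close>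
definition slice :: "nat \<Rightarrow> (nat \<Rightarrow> nat) set \<Rightarrow> (nat \<Rightarrow> complex) \<Rightarrow> ((nat \<Rightarrow> nat) \<Rightarrow> complex) \<Rightarrow> (nat \<Rightarrow> (nat \<Rightarrow> nat) \<Rightarrow> 'a::cstar_algebra) \<Rightarrow> 'a" where
  "slice n F w v X = (\<Sum>i\<in>{1..n}. \<Sum>\<sigma>\<in>F. scaleC (w i * v \<sigma>) (X i \<sigma>))"

definition qcomm_ideal :: "nat \<Rightarrow> (nat \<Rightarrow> nat) set \<Rightarrow> (nat \<Rightarrow> nat \<Rightarrow> 'a::cstar_algebra) \<Rightarrow> 'a set" where
  "qcomm_ideal n F a = closed_ideal_gen
     {slice n F w v (lhs_tensor n F a m) - slice n F w v (rhs_tensor n F a m) | m w v. True}"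

inductive_set perm_group_gen :: "(nat \<Rightarrow> nat) set \<Rightarrow> (nat \<Rightarrow> nat) set" for F where
  pg_id: "id \<in> perm_group_gen F"
| pg_gen: "\<sigma> \<in> F \<Longrightarrow> \<sigma> \<in> perm_group_gen F"
| pg_comp: "\<sigma> \<in> perm_group_gen F \<Longrightarrow> \<tau> \<in> perm_group_gen F \<Longrightarrow> \<sigma> \<circ> \<tau> \<in> perm_group_gen F"
| pg_inv: "\<sigma> \<in> perm_group_gen F \<Longrightarrow> inv \<sigma> \<in> perm_group_gen F"

end

theory Submission
  imports Defs
begin

(* Proof of Proposition 3.2.  The generators of the ideal J are slices of the difference
   (Phi \<otimes> id)Psi_B(m) - (Psi_B \<otimes> id)Phi(m).  For sigma \<in> F a permutation of {1..n},
   the (i, sigma)-coordinate of this difference is  sum_j m_j (a_{i,sigma j} - a_{sigma^-1 i, j}),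
   so every slice is a linear combination of the "intertwining relations"
   a_{i,sigma j} - a_{sigma^-1 i, j}, and conversely slicing e_j with the point functionals at
   (i, sigma) recovers each single relation.  Hence J is generated by these relations.
   Reindexing i := sigma i turns them into the "invariance relations" a_{sigma i, sigma j} - a_{i,j}.
   Finally, the closed ideal generated by the invariance relations for F already contains those
   for every composite and inverse of members of F, so it equals the one generated by the
   invariance relations for the generated group; the same computation applied to that (finite)
   group yields the last claim. *)

lemma scaleC_zero_left: "scaleC 0 (x::'a::cstar_algebra) = 0"
  using scaleR_scaleC[of 0 x] by simp

lemma scaleC_diff_right: "scaleC c ((x::'a::cstar_algebra) - y) = scaleC c x - scaleC c y"
  using scaleC_add_right[of c "x - y" y] by (simp add: algebra_simps)

lemma scaleC_minus_one: "scaleC (-1) (x::'a::cstar_algebra) = - x"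
  using scaleR_scaleC[of "-1" x] by simp

lemma scaleC_sum_left: "scaleC (sum f A) (x::'a::cstar_algebra) = (\<Sum>y\<in>A. scaleC (f y) x)"
  by (induction A rule: infinite_finite_induct) (auto simp: scaleC_zero_left scaleC_add_left)

lemma scaleC_if: "scaleC (if P then c else 0) (x::'a::cstar_algebra) = (if P then scaleC c x else 0)"
  by (simp add: scaleC_zero_left)

lemma closed_ideal_zero: "closed_ideal I \<Longrightarrow> 0 \<in> I"
  unfolding closed_ideal_def by auto

lemma closed_ideal_add: "closed_ideal I \<Longrightarrow> x \<in> I \<Longrightarrow> y \<in> I \<Longrightarrow> x + y \<in> I"
  unfolding closed_ideal_def by auto

lemma closed_ideal_scaleC: "closed_ideal I \<Longrightarrow> x \<in> I \<Longrightarrow> scaleC c x \<in> I"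
  unfolding closed_ideal_def by auto

lemma closed_ideal_uminus: "closed_ideal I \<Longrightarrow> x \<in> I \<Longrightarrow> - x \<in> I"
  using closed_ideal_scaleC[of I x "-1"] by (simp add: scaleC_minus_one)

lemma closed_ideal_sum: "closed_ideal I \<Longrightarrow> (\<And>x. x \<in> A \<Longrightarrow> f x \<in> I) \<Longrightarrow> sum f A \<in> I"
  by (induction A rule: infinite_finite_induct) (auto intro: closed_ideal_zero closed_ideal_add)

lemma closed_ideal_closed_ideal_gen: "closed_ideal (closed_ideal_gen (S::'a::cstar_algebra set))"
  unfolding closed_ideal_gen_def closed_ideal_def by (auto intro!: closed_Inter)

lemma closed_ideal_gen_member: "x \<in> S \<Longrightarrow> x \<in> closed_ideal_gen S"
  unfolding closed_ideal_gen_def by auto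

lemma closed_ideal_gen_least: "S \<subseteq> I \<Longrightarrow> closed_ideal I \<Longrightarrow> closed_ideal_gen S \<subseteq> I"
  unfolding closed_ideal_gen_def by auto

lemma closed_ideal_gen_eqI:
  assumes "S \<subseteq> closed_ideal_gen T" and "T \<subseteq> closed_ideal_gen S"
  shows "closed_ideal_gen S = closed_ideal_gen (T::'a::cstar_algebra set)"
  using assms by (meson closed_ideal_closed_ideal_gen closed_ideal_gen_least subset_antisym)

lemma lhs_tensor_coordinate:
  assumes perm: "\<sigma> permutes {1..n}" and "\<sigma> \<in> F"
  shows "lhs_tensor n F a m i \<sigma> = (\<Sum>j\<in>{1..n}. scaleC (m j) (a i (\<sigma> j)))"
proof -
  have "lhs_tensor n F a m i \<sigma>
      = (\<Sum>k\<in>{1..n}. \<Sum>j\<in>{1..n}. if \<sigma> j = k then scaleC (m j) (a i k) else 0)"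
    unfolding lhs_tensor_def PsiB_def if_P[OF \<open>\<sigma> \<in> F\<close>] scaleC_sum_left
    by (intro sum.cong refl) (simp add: scaleC_zero_left)
  also have "\<dots> = (\<Sum>j\<in>{1..n}. \<Sum>k\<in>{1..n}. if \<sigma> j = k then scaleC (m j) (a i k) else 0)"
    by (rule sum.swap)
  also have "\<dots> = (\<Sum>j\<in>{1..n}. scaleC (m j) (a i (\<sigma> j)))"
    using permutes_in_image[OF perm] by (intro sum.cong refl) (simp add: sum.delta)
  finally show ?thesis .
qed

text \<open>For sigma \<in> F, the (i, sigma)-coordinate of (Psi_B \<otimes> id)Phi(m) is
  sum_j m_j a_{sigma^-1 i, j}, since Psi_B(e_k) has sigma-component e_{sigma k}.\<close>

lemma rhs_tensor_coordinate:
  assumes perm: "\<sigma> permutes {1..n}" and "\<sigma> \<in> F" and "i \<in> {1..n}"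
  shows "rhs_tensor n F a m i \<sigma> = (\<Sum>j\<in>{1..n}. scaleC (m j) (a (inv \<sigma> i) j))"
proof -
  have Psi_basis: "PsiB n F (basis_vec k) i \<sigma> = (if k = inv \<sigma> i then 1 else 0)"
    if "k \<in> {1..n}" for k
  proof -
    have "PsiB n F (basis_vec k) i \<sigma>
        = (\<Sum>j\<in>{1..n}. if j = k then (if \<sigma> k = i then 1 else 0) else 0)"
      unfolding PsiB_def if_P[OF \<open>\<sigma> \<in> F\<close>] by (intro sum.cong) (auto simp: basis_vec_def)
    also have "\<dots> = (if \<sigma> k = i then 1 else 0)"
      using that by simp
    finally show ?thesis
      using perm by (metis permutes_inverses(1,2))
  qed
  have "inv \<sigma> i \<in> {1..n}"
    using assms by (meson permutes_in_image permutes_inv)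
  have "rhs_tensor n F a m i \<sigma> = (\<Sum>k\<in>{1..n}. if k = inv \<sigma> i then PhiA n a m k else 0)"
    unfolding rhs_tensor_def by (intro sum.cong refl) (simp add: Psi_basis scaleC_if scaleC_one)
  also have "\<dots> = PhiA n a m (inv \<sigma> i)"
    using \<open>inv \<sigma> i \<in> {1..n}\<close> by (simp add: sum.delta')
  finally show ?thesis
    unfolding PhiA_def .
qed

lemma slice_difference:
  assumes "\<forall>\<sigma>\<in>F. \<sigma> permutes {1..n}"
  shows "slice n F w v (lhs_tensor n F a m) - slice n F w v (rhs_tensor n F a m) =
     (\<Sum>i\<in>{1..n}. \<Sum>\<sigma>\<in>F. scaleC (w i * v \<sigma>)
        (\<Sum>j\<in>{1..n}. scaleC (m j) (a i (\<sigma> j) - a (inv \<sigma> i) j)))"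
  unfolding slice_def sum_subtractf[symmetric] scaleC_diff_right[symmetric]
  using assms
  by (intro sum.cong refl)
     (simp add: lhs_tensor_coordinate rhs_tensor_coordinate scaleC_diff_right sum_subtractf)

text \<open>Intertwining relations a_{i, sigma j} - a_{sigma^-1 i, j}: they express that the family
  a commutes with the classical family F.\<close>

definition intertwining_relations ::
    "'i set \<Rightarrow> ('i \<Rightarrow> 'i) set \<Rightarrow> ('i \<Rightarrow> 'i \<Rightarrow> 'a::cstar_algebra) \<Rightarrow> 'a set" where
  "intertwining_relations S F a = {a i (\<sigma> j) - a (inv \<sigma> i) j | i j \<sigma>. i \<in> S \<and> j \<in> S \<and> \<sigma> \<in> F}"

lemma intertwining_relationsI:
  "i \<in> S \<Longrightarrow> j \<in> S \<Longrightarrow> \<sigma> \<in> F \<Longrightarrow> a i (\<sigma> j) - a (inv \<sigma> i) j \<in> intertwining_relations S F a"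
  unfolding intertwining_relations_def by (intro CollectI exI[of _ i] exI[of _ j] exI[of _ \<sigma>]) simp

lemma intertwining_relationsE:
  assumes "x \<in> intertwining_relations S F a"
  obtains i j \<sigma> where "x = a i (\<sigma> j) - a (inv \<sigma> i) j" "i \<in> S" "j \<in> S" "\<sigma> \<in> F"
  using assms unfolding intertwining_relations_def by blast

definition invariance_relations ::
    "'i set \<Rightarrow> ('i \<Rightarrow> 'i) set \<Rightarrow> ('i \<Rightarrow> 'i \<Rightarrow> 'a::cstar_algebra) \<Rightarrow> 'a set" where
  "invariance_relations S F a = {a (\<sigma> i) (\<sigma> j) - a i j | i j \<sigma>. i \<in> S \<and> j \<in> S \<and> \<sigma> \<in> F}"

lemma invariance_relationsI:
  "i \<in> S \<Longrightarrow> j \<in> S \<Longrightarrow> \<sigma> \<in> F \<Longrightarrow> a (\<sigma> i) (\<sigma> j) - a i j \<in> invariance_relations S F a"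
  unfolding invariance_relations_def by (intro CollectI exI[of _ i] exI[of _ j] exI[of _ \<sigma>]) simp

lemma invariance_relationsE:
  assumes "x \<in> invariance_relations S F a"
  obtains i j \<sigma> where "x = a (\<sigma> i) (\<sigma> j) - a i j" "i \<in> S" "j \<in> S" "\<sigma> \<in> F"
  using assms unfolding invariance_relations_def by blast

text \<open>The quantum commutant ideal is generated by the intertwining relations: each slice lies in
  their ideal by the formula above, and the point slice at (e_i, delta_sigma) of the generator
  for m = e_j is exactly one relation.\<close>

lemma qcomm_ideal_intertwining:
  assumes fin: "finite F" and perm: "\<forall>\<sigma>\<in>F. \<sigma> permutes {1..n}"
  shows "qcomm_ideal n F a = closed_ideal_gen (intertwining_relations {1..n} F a)"
  unfolding qcomm_ideal_def
proof (rule closed_ideal_gen_eqI)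
  let ?I = "closed_ideal_gen (intertwining_relations {1..n} F a)"
  have I: "closed_ideal ?I"
    by (rule closed_ideal_closed_ideal_gen)
  have rel: "a i (\<sigma> j) - a (inv \<sigma> i) j \<in> ?I" if "i \<in> {1..n}" "j \<in> {1..n}" "\<sigma> \<in> F" for i j \<sigma>
    by (intro closed_ideal_gen_member intertwining_relationsI that)
  show "{slice n F w v (lhs_tensor n F a m) - slice n F w v (rhs_tensor n F a m) | m w v. True} \<subseteq> ?I"
    unfolding slice_difference[OF perm]
    by (clarify, intro closed_ideal_sum[OF I] closed_ideal_scaleC[OF I] rel) auto
next
  show "intertwining_relations {1..n} F a \<subseteq> closed_ideal_gen
      {slice n F w v (lhs_tensor n F a m) - slice n F w v (rhs_tensor n F a m) | m w v. True}"
  proof (rule subsetI, rule closed_ideal_gen_member)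
    fix x assume "x \<in> intertwining_relations {1..n} F a"
    then obtain i0 j0 \<sigma>0 where x: "x = a i0 (\<sigma>0 j0) - a (inv \<sigma>0 i0) j0"
      and i0: "i0 \<in> {1..n}" and j0: "j0 \<in> {1..n}" and \<sigma>0: "\<sigma>0 \<in> F"
      by (rule intertwining_relationsE)
    define v where "v = (\<lambda>\<tau>. if \<tau> = \<sigma>0 then (1::complex) else 0)"
    have point_slice: "scaleC (basis_vec i0 i * v \<sigma>) (X::'a)
        = (if \<sigma> = \<sigma>0 then if i = i0 then X else 0 else 0)" for i \<sigma> X
      by (simp add: basis_vec_def v_def scaleC_zero_left scaleC_one)
    have basis_comb: "(\<Sum>j\<in>{1..n}. scaleC (basis_vec j0 j) (X j)) = (X j0::'a)" for X
      using j0 by (simp add: basis_vec_def scaleC_if scaleC_one)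
    have "slice n F (basis_vec i0) v (lhs_tensor n F a (basis_vec j0))
        - slice n F (basis_vec i0) v (rhs_tensor n F a (basis_vec j0)) = x"
      unfolding slice_difference[OF perm] basis_comb point_slice
      using i0 \<sigma>0 fin by (simp add: sum.delta' x)
    then show "x \<in> {slice n F w v (lhs_tensor n F a m) - slice n F w v (rhs_tensor n F a m) | m w v. True}"
      by blast
  qed
qed

text \<open>Reindexing i := sigma i identifies the two families of relations.\<close>

lemma intertwining_eq_invariance_relations:
  assumes perm: "\<forall>\<sigma>\<in>F. \<sigma> permutes S"
  shows "intertwining_relations S F a = invariance_relations S F a"
proof (intro equalityI subsetI)
  fix x assume "x \<in> intertwining_relations S F a"
  then obtain i j \<sigma> where x: "x = a i (\<sigma> j) - a (inv \<sigma> i) j" and "i \<in> S" "j \<in> S" "\<sigma> \<in> F"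
    by (rule intertwining_relationsE)
  with perm have "inv \<sigma> i \<in> S" and "\<sigma> (inv \<sigma> i) = i"
    by (auto simp: permutes_inverses(1) permutes_in_image permutes_inv)
  with invariance_relationsI[of "inv \<sigma> i" S j \<sigma> F a] show "x \<in> invariance_relations S F a"
    using x \<open>j \<in> S\<close> \<open>\<sigma> \<in> F\<close> by simp
next
  fix x assume "x \<in> invariance_relations S F a"
  then obtain i j \<sigma> where x: "x = a (\<sigma> i) (\<sigma> j) - a i j" and "i \<in> S" "j \<in> S" "\<sigma> \<in> F"
    by (rule invariance_relationsE)
  with perm have "\<sigma> i \<in> S" and "inv \<sigma> (\<sigma> i) = i"
    by (auto simp: permutes_inverses(2) permutes_in_image)
  with intertwining_relationsI[of "\<sigma> i" S j \<sigma> F a] show "x \<in> intertwining_relations S F a"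
    using x \<open>j \<in> S\<close> \<open>\<sigma> \<in> F\<close> by simp
qed

lemma perm_group_gen_permutes:
  assumes "\<sigma> \<in> perm_group_gen F" and "\<forall>\<tau>\<in>F. \<tau> permutes S"
  shows "\<sigma> permutes S"
  using assms
  by (induction rule: perm_group_gen.induct) (auto intro: permutes_id permutes_compose permutes_inv)

lemma finite_perm_group_gen:
  assumes "finite S" and "\<forall>\<tau>\<in>F. \<tau> permutes S"
  shows "finite (perm_group_gen F)"
proof (rule finite_subset)
  show "perm_group_gen F \<subseteq> {\<sigma>. \<sigma> permutes S}"
    using assms(2) perm_group_gen_permutes by blast
qed (rule finite_permutations[OF assms(1)])

text \<open>Invariance under F forces invariance under each element of the generated group, modulo the
  ideal: the relations for sigma o tau telescope, and those for inv sigma are negated ones for sigma.\<close>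

lemma invariance_relation_group_member:
  assumes perm: "\<forall>\<tau>\<in>F. \<tau> permutes S" and "\<sigma> \<in> perm_group_gen F"
  shows "\<forall>i\<in>S. \<forall>j\<in>S. a (\<sigma> i) (\<sigma> j) - a i j \<in> closed_ideal_gen (invariance_relations S F a)"
  using \<open>\<sigma> \<in> perm_group_gen F\<close>
proof (induction rule: perm_group_gen.induct)
  let ?I = "closed_ideal_gen (invariance_relations S F a)"
  have I: "closed_ideal ?I"
    by (rule closed_ideal_closed_ideal_gen)
  {
    case pg_id
    show ?case using closed_ideal_zero[OF I] by simp
  next
    case (pg_gen \<sigma>)
    then show ?case
      by (auto intro!: closed_ideal_gen_member invariance_relationsI)
  next
    case (pg_comp \<sigma> \<tau>)
    have "\<tau> permutes S"
      using perm_group_gen_permutes[OF pg_comp.hyps(2) perm] .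
    then have "(a (\<sigma> (\<tau> i)) (\<sigma> (\<tau> j)) - a (\<tau> i) (\<tau> j)) + (a (\<tau> i) (\<tau> j) - a i j) \<in> ?I"
      if "i \<in> S" "j \<in> S" for i j
      using pg_comp.IH that by (intro closed_ideal_add[OF I]) (auto simp: permutes_in_image)
    then show ?case by simp
  next
    case (pg_inv \<sigma>)
    have \<sigma>: "\<sigma> permutes S"
      using perm_group_gen_permutes[OF pg_inv.hyps perm] .
    then have "- (a (\<sigma> (inv \<sigma> i)) (\<sigma> (inv \<sigma> j)) - a (inv \<sigma> i) (inv \<sigma> j)) \<in> ?I"
      if "i \<in> S" "j \<in> S" for i j
      using pg_inv.IH that by (intro closed_ideal_uminus[OF I]) (auto simp: permutes_in_image permutes_inv)
    then show ?case
      using \<sigma> by (simp add: permutes_inverses(1))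
  }
qed

lemma invariance_ideal_perm_group_gen:
  assumes "\<forall>\<tau>\<in>F. \<tau> permutes S"
  shows "closed_ideal_gen (invariance_relations S F a)
       = closed_ideal_gen (invariance_relations S (perm_group_gen F) a)"
proof (rule closed_ideal_gen_eqI; rule subsetI)
  fix x assume "x \<in> invariance_relations S F a"
  then show "x \<in> closed_ideal_gen (invariance_relations S (perm_group_gen F) a)"
    by (elim invariance_relationsE)
       (simp add: closed_ideal_gen_member invariance_relationsI perm_group_gen.pg_gen)
next
  fix x assume "x \<in> invariance_relations S (perm_group_gen F) a"
  then show "x \<in> closed_ideal_gen (invariance_relations S F a)"
    by (elim invariance_relationsE) (simp add: invariance_relation_group_member[OF assms])
qed

theorem proposition3p2:
  fixes n :: nat and F :: "(nat \<Rightarrow> nat) set" and a :: "nat \<Rightarrow> nat \<Rightarrow> 'a::cstar_algebra"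
  assumes "finite F"
    and "\<forall>\<sigma>\<in>F. \<sigma> permutes {1..n}"
    and "\<forall>i\<in>{1..n}. \<forall>j\<in>{1..n}. cstar (a i j) * a i j = a i j"
    and "\<forall>i\<in>{1..n}. (\<Sum>j\<in>{1..n}. a i j) = 1"
  shows "qcomm_ideal n F a = closed_ideal_gen
           {a i (\<sigma> j) - a (inv \<sigma> i) j | i j \<sigma>. i \<in> {1..n} \<and> j \<in> {1..n} \<and> \<sigma> \<in> F}
       \<and> qcomm_ideal n F a = closed_ideal_gen
           {a (\<sigma> i) (\<sigma> j) - a i j | i j \<sigma>. i \<in> {1..n} \<and> j \<in> {1..n} \<and> \<sigma> \<in> F}
       \<and> qcomm_ideal n F a = qcomm_ideal n (perm_group_gen F) a"
proof -
  let ?G = "perm_group_gen F"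
  have G_perm: "\<forall>\<sigma>\<in>?G. \<sigma> permutes {1..n}"
    using perm_group_gen_permutes assms(2) by blast
  have G_fin: "finite ?G"
    using finite_perm_group_gen[OF _ assms(2)] by simp
  have F_inter: "qcomm_ideal n F a = closed_ideal_gen (intertwining_relations {1..n} F a)"
    using qcomm_ideal_intertwining[OF assms(1,2)] .
  also have F_inv: "\<dots> = closed_ideal_gen (invariance_relations {1..n} F a)"
    by (simp only: intertwining_eq_invariance_relations[OF assms(2)])
  also have "\<dots> = closed_ideal_gen (invariance_relations {1..n} ?G a)"
    using invariance_ideal_perm_group_gen[OF assms(2)] .
  also have "\<dots> = qcomm_ideal n ?G a"
    by (simp only: qcomm_ideal_intertwining[OF G_fin G_perm] intertwining_eq_invariance_relations[OF G_perm])
  finally have "qcomm_ideal n F a = qcomm_ideal n ?G a" .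
  with F_inter F_inv show ?thesis
    unfolding intertwining_relations_def invariance_relations_def by simp
qed

end
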